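(* Consider the following iteration (Kaczmarz method with line-search), started at $x_0\in\mathbb{R}^n$: for $k=0,1,2,\ldots$, set $d=P(x_k)-x_k$ and $\delta=\|d\|^2$; if $\delta=0$, terminate and return $x_k$; otherwise set $\rho=\|r(x_k)\|^2$, $s=\frac12+\frac{\rho}{2\delta}$ and $x_{k+1}=x_k+sd$. Then either the iteration terminates after finitely many steps and returns some $x_k$ with $Ax_k=b$, or it generates a well-defined infinite sequence $(x_k)_k$ such that for all $k$ and all $x^*\in\mathbb{R}^n$ with $Ax^*=b$: \[x_{k+1}=\operatorname{argmin}_{\xi\in\operatorname{aff}(x_k,P(x_k))}\|\xi-x^*\|^2,\qquad \|x_k-x^*\|^2-\|x_{k+1}-x^*\|^2=\frac{(\|r(x_k)\|^2+\|P(x_k)-x_k\|^2)^2}{4\|P(x_k)-x_k\|^2},\] and in particular $\|x_{k+1}-x^*\|^2\le\|P(x_k)-x^*\|^2$.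
   Context: Let $A=(a_1,\ldots,a_m)^T\in\mathbb{R}^{m\times n}$ with rows $a_j\in\mathbb{R}^n\setminus\{0\}$, and let $b\in\mathbb{R}^m$ lie in the range of $A$. Norms are Euclidean. For $j=1,\ldots,m$ define the projectors $P_j:\mathbb{R}^n\to\mathbb{R}^n$, $P_j(x)=\big(I-\frac{a_ja_j^T}{\|a_j\|^2}\big)x+\frac{b_j}{\|a_j\|^2}a_j$ (the orthogonal projection onto $\{z:a_j^Tz=b_j\}$), and the Kaczmarz cycle $P=P_m\circ\cdots\circ P_1$. The residual $r:\mathbb{R}^n\to\mathbb{R}^m$ is defined by $r_1(x)=(a_1^Tx-b_1)/\|a_1\|$ and $r_j(x)=(a_j^T(P_{j-1}\circ\cdots\circ P_1)(x)-b_j)/\|a_j\|$ for $j=2,\ldots,m$. $\operatorname{aff}(\cdot)$ denotes the affine hull. *)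

theory Defs
  imports "HOL-Analysis.Analysis"
begin

text \<open>Rows are indexed 0..m-1: row j of A is a j, right-hand side b j.\<close>

definition proj :: "(nat \<Rightarrow> real^'n) \<Rightarrow> (nat \<Rightarrow> real) \<Rightarrow> nat \<Rightarrow> real^'n \<Rightarrow> real^'n" where
  "proj a b j x = x - ((inner (a j) x) / (norm (a j))^2) *\<^sub>R a j + (b j / (norm (a j))^2) *\<^sub>R a j"

fun cyc :: "(nat \<Rightarrow> real^'n) \<Rightarrow> (nat \<Rightarrow> real) \<Rightarrow> nat \<Rightarrow> real^'n \<Rightarrow> real^'n" where
  "cyc a b 0 x = x"
| "cyc a b (Suc k) x = proj a b k (cyc a b k x)"

definition kcycle :: "nat \<Rightarrow> (nat \<Rightarrow> real^'n) \<Rightarrow> (nat \<Rightarrow> real) \<Rightarrow> real^'n \<Rightarrow> real^'n" where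
  "kcycle m a b x = cyc a b m x"

definition resid :: "(nat \<Rightarrow> real^'n) \<Rightarrow> (nat \<Rightarrow> real) \<Rightarrow> nat \<Rightarrow> real^'n \<Rightarrow> real" where
  "resid a b j x = (inner (a j) (cyc a b j x) - b j) / norm (a j)"

definition resid_sq :: "nat \<Rightarrow> (nat \<Rightarrow> real^'n) \<Rightarrow> (nat \<Rightarrow> real) \<Rightarrow> real^'n \<Rightarrow> real" where
  "resid_sq m a b x = (\<Sum>j<m. (resid a b j x)^2)"

text \<open>one step of Kaczmarz with line search (used only when delta \<noteq> 0)\<close>
definition ls_step :: "nat \<Rightarrow> (nat \<Rightarrow> real^'n) \<Rightarrow> (nat \<Rightarrow> real) \<Rightarrow> real^'n \<Rightarrow> real^'n" where
  "ls_step m a b x =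
     (let d = kcycle m a b x - x; \<delta> = (norm d)^2; \<rho> = resid_sq m a b x;
          s = 1/2 + \<rho> / (2 * \<delta>)
      in x + s *\<^sub>R d)"

definition ls_iter :: "nat \<Rightarrow> (nat \<Rightarrow> real^'n) \<Rightarrow> (nat \<Rightarrow> real) \<Rightarrow> real^'n \<Rightarrow> nat \<Rightarrow> real^'n" where
  "ls_iter m a b x0 k = (ls_step m a b ^^ k) x0"

end

theory Submission
  imports Defs
begin

text \<open>Each \<open>P\<^sub>j\<close> projects orthogonally onto a hyperplane containing the solution
  \<open>x\<^sup>*\<close>, so by Pythagoras one cycle decreases \<open>\<parallel>x - x\<^sup>*\<parallel>\<^sup>2\<close> by exactly \<open>\<rho> = \<parallel>r(x)\<parallel>\<^sup>2\<close>.
  Expanding \<open>\<parallel>P(x) - x\<^sup>*\<parallel>\<^sup>2\<close> around \<open>x\<close> then gives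
  \<open>\<langle>x - x\<^sup>*, d\<rangle> = -(\<rho> + \<delta>)/2\<close> for \<open>d = P(x) - x\<close>, \<open>\<delta> = \<parallel>d\<parallel>\<^sup>2\<close>, which is
  all that is needed to locate the foot of the perpendicular from \<open>x\<^sup>*\<close> to the line
  through \<open>x\<close> and \<open>P(x)\<close>: it is \<open>x + s d\<close> with \<open>s = 1/2 + \<rho>/(2\<delta>)\<close>, computable
  without knowing \<open>x\<^sup>*\<close>. A fixed point of \<open>P\<close> has zero residual and hence solves
  \<open>Ax = b\<close>.\<close>

lemma arg_min_eqI:
  fixes f :: "'a \<Rightarrow> 'b::linorder"
  assumes "P a" and "\<And>y. P y \<Longrightarrow> y \<noteq> a \<Longrightarrow> f a < f y"
  shows "arg_min f P = a"
  unfolding arg_min_def is_arg_min_def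
proof (rule some_equality)
  show "P a \<and> (\<nexists>y. P y \<and> f y < f a)"
    using assms by (metis less_asym)
  show "x = a" if "P x \<and> (\<nexists>y. P y \<and> f y < f x)" for x
    using assms that by blast
qed

lemma norm_sq_along_orthogonal:
  fixes y z d :: "'a::real_inner"
  assumes "inner (y - z) d = 0"
  shows "(norm (y + t *\<^sub>R d - z))\<^sup>2 = (norm (y - z))\<^sup>2 + t\<^sup>2 * (norm d)\<^sup>2"
proof -
  have "orthogonal (y - z) (t *\<^sub>R d)"
    using assms by (simp add: orthogonal_def)
  then have "(norm ((y - z) + t *\<^sub>R d))\<^sup>2 = (norm (y - z))\<^sup>2 + (norm (t *\<^sub>R d))\<^sup>2"
    by (rule norm_add_Pythagorean)
  then show ?thesis
    by (simp add: algebra_simps power_mult_distrib)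
qed

lemma arg_min_dist_affine_hull_2:
  fixes p q y z :: "'a::real_inner"
  assumes "p \<noteq> q" and "y \<in> affine hull {p, q}" and "inner (y - z) (q - p) = 0"
  shows "(ARG_MIN (\<lambda>\<xi>. (norm (\<xi> - z))\<^sup>2) \<xi>. \<xi> \<in> affine hull {p, q}) = y"
proof (rule arg_min_eqI)
  show "y \<in> affine hull {p, q}" by fact
  fix \<xi> assume "\<xi> \<in> affine hull {p, q}" and "\<xi> \<noteq> y"
  then obtain s t where y: "y = p + s *\<^sub>R (q - p)" and \<xi>: "\<xi> = p + t *\<^sub>R (q - p)"
    using assms(2) unfolding affine_hull_2_alt by auto
  have "\<xi> = y + (t - s) *\<^sub>R (q - p)"
    unfolding y \<xi> by (simp add: algebra_simps)
  then have "(norm (\<xi> - z))\<^sup>2 = (norm (y - z))\<^sup>2 + (t - s)\<^sup>2 * (norm (q - p))\<^sup>2"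
    using norm_sq_along_orthogonal[OF assms(3)] by simp
  moreover have "t \<noteq> s" using \<open>\<xi> \<noteq> y\<close> y \<xi> by auto
  ultimately show "(norm (y - z))\<^sup>2 < (norm (\<xi> - z))\<^sup>2"
    using assms(1) by simp
qed

lemma line_search_step:
  fixes p q z :: "'a::real_inner"
  defines "\<delta> \<equiv> (norm (q - p))\<^sup>2"
  assumes "p \<noteq> q" and \<rho>: "(norm (p - z))\<^sup>2 - (norm (q - z))\<^sup>2 = \<rho>"
  defines "y \<equiv> p + (1/2 + \<rho> / (2 * \<delta>)) *\<^sub>R (q - p)"
  shows "y = (ARG_MIN (\<lambda>\<xi>. (norm (\<xi> - z))\<^sup>2) \<xi>. \<xi> \<in> affine hull {p, q})"
    and "(norm (p - z))\<^sup>2 - (norm (y - z))\<^sup>2 = (\<rho> + \<delta>)\<^sup>2 / (4 * \<delta>)"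
    and "(norm (y - z))\<^sup>2 \<le> (norm (q - z))\<^sup>2"
proof -
  define d where "d = q - p"
  define s where "s = 1/2 + \<rho> / (2 * \<delta>)"
  have \<delta>_pos: "\<delta> > 0" and \<delta>_d: "\<delta> = inner d d"
    using \<open>p \<noteq> q\<close> unfolding \<delta>_def d_def by (simp_all add: power2_norm_eq_inner)
  have y: "y = p + s *\<^sub>R d" unfolding y_def s_def d_def ..
  have "(norm (q - z))\<^sup>2 = (norm (p - z))\<^sup>2 + 2 * inner (p - z) d + \<delta>"
    unfolding \<delta>_d d_def power2_norm_eq_inner by (simp add: algebra_simps inner_commute)
  then have "inner (p - z) d = - (\<rho> + \<delta>) / 2" using \<rho> by simp
  moreover have "s * \<delta> = (\<rho> + \<delta>) / 2" unfolding s_def using \<delta>_pos by (simp add: field_simps)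
  ultimately have orth: "inner (y - z) d = 0"
    unfolding y \<delta>_d by (simp add: algebra_simps)
  have along: "(norm (y + t *\<^sub>R d - z))\<^sup>2 = (norm (y - z))\<^sup>2 + t\<^sup>2 * \<delta>" for t
    unfolding \<delta>_def d_def[symmetric] by (rule norm_sq_along_orthogonal[OF orth])
  have "y \<in> affine hull {p, q}" unfolding y d_def affine_hull_2_alt by (rule rangeI)
  then show "y = (ARG_MIN (\<lambda>\<xi>. (norm (\<xi> - z))\<^sup>2) \<xi>. \<xi> \<in> affine hull {p, q})"
    using arg_min_dist_affine_hull_2[OF \<open>p \<noteq> q\<close>] orth unfolding d_def by simp
  have "(norm (p - z))\<^sup>2 = (norm (y - z))\<^sup>2 + s\<^sup>2 * \<delta>"
    using along[of "-s"] unfolding y by simp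
  moreover have "s\<^sup>2 * \<delta> = (\<rho> + \<delta>)\<^sup>2 / (4 * \<delta>)"
    using \<delta>_pos unfolding s_def by (simp add: power2_eq_square field_simps)
  ultimately show "(norm (p - z))\<^sup>2 - (norm (y - z))\<^sup>2 = (\<rho> + \<delta>)\<^sup>2 / (4 * \<delta>)"
    by simp
  have "(norm (q - z))\<^sup>2 = (norm (y - z))\<^sup>2 + (1 - s)\<^sup>2 * \<delta>"
    using along[of "1 - s"] unfolding y d_def by (simp add: algebra_simps)
  then show "(norm (y - z))\<^sup>2 \<le> (norm (q - z))\<^sup>2"
    using \<delta>_pos by simp
qed

lemma proj_pythagoras:
  assumes "a j \<noteq> 0" and "inner (a j) z = b j"
  shows "(norm (y - z))\<^sup>2 = (norm (proj a b j y - z))\<^sup>2 + ((inner (a j) y - b j) / norm (a j))\<^sup>2"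
proof -
  define c where "c = (inner (a j) y - b j) / (norm (a j))\<^sup>2"
  have proj: "proj a b j y = y - c *\<^sub>R a j"
    unfolding proj_def c_def by (simp add: diff_divide_distrib scaleR_diff_left)
  have "inner (proj a b j y - z) (a j) = inner (a j) y - c * (norm (a j))\<^sup>2 - inner (a j) z"
    unfolding proj by (simp add: inner_diff_left inner_diff_right inner_commute power2_norm_eq_inner)
  also have "\<dots> = 0"
    using assms unfolding c_def by simp
  finally have "(norm (proj a b j y + c *\<^sub>R a j - z))\<^sup>2
      = (norm (proj a b j y - z))\<^sup>2 + c\<^sup>2 * (norm (a j))\<^sup>2"
    by (rule norm_sq_along_orthogonal)
  also have "c\<^sup>2 * (norm (a j))\<^sup>2 = ((inner (a j) y - b j) / norm (a j))\<^sup>2"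
    using assms(1) unfolding c_def by (simp add: power_divide power2_eq_square)
  finally show ?thesis
    unfolding proj by simp
qed

lemma norm_sq_cyc_decrease:
  assumes "\<forall>j<m. a j \<noteq> 0" and "\<forall>j<m. inner (a j) z = b j" and "k \<le> m"
  shows "(norm (x - z))\<^sup>2 - (norm (cyc a b k x - z))\<^sup>2 = (\<Sum>j<k. (resid a b j x)\<^sup>2)"
  using \<open>k \<le> m\<close>
proof (induction k)
  case 0
  then show ?case by simp
next
  case (Suc k)
  then have "k < m" by simp
  then have "(norm (cyc a b k x - z))\<^sup>2 = (norm (cyc a b (Suc k) x - z))\<^sup>2 + (resid a b k x)\<^sup>2"
    using proj_pythagoras[of a k z b "cyc a b k x"] assms(1,2) unfolding resid_def by simp
  then show ?case
    using Suc by simp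
qed

lemma norm_sq_kcycle_decrease:
  assumes "\<forall>j<m. a j \<noteq> 0" and "\<forall>j<m. inner (a j) z = b j"
  shows "(norm (x - z))\<^sup>2 - (norm (kcycle m a b x - z))\<^sup>2 = resid_sq m a b x"
  using norm_sq_cyc_decrease[OF assms order_refl]
  unfolding kcycle_def resid_sq_def by simp

lemma kcycle_fixed_imp_solution:
  assumes nz: "\<forall>j<m. a j \<noteq> 0" and "\<forall>j<m. inner (a j) z = b j"
    and fixed: "kcycle m a b x = x"
  shows "\<forall>j<m. inner (a j) x = b j"
proof -
  have "resid_sq m a b x = 0"
    using norm_sq_kcycle_decrease[OF assms(1,2), of x] fixed by simp
  then have "\<forall>j<m. resid a b j x = 0"
    unfolding resid_sq_def by (simp add: sum_nonneg_eq_0_iff)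
  then have sat: "inner (a j) (cyc a b j x) = b j" if "j < m" for j
    using nz that unfolding resid_def by simp
  have "cyc a b k x = x" if "k \<le> m" for k
    using that
  proof (induction k)
    case 0
    then show ?case by simp
  next
    case (Suc k)
    then have "inner (a k) x = b k" using sat[of k] by simp
    then show ?case using Suc by (simp add: proj_def)
  qed
  then show ?thesis
    using sat by simp
qed

lemma ls_step_props:
  assumes "\<forall>j<m. a j \<noteq> 0" and "\<forall>j<m. inner (a j) z = b j"
    and "kcycle m a b x \<noteq> x"
  shows "ls_step m a b x = (ARG_MIN (\<lambda>\<xi>. (norm (\<xi> - z))\<^sup>2) \<xi>. \<xi> \<in> affine hull {x, kcycle m a b x})
      \<and> (norm (x - z))\<^sup>2 - (norm (ls_step m a b x - z))\<^sup>2
          = (resid_sq m a b x + (norm (kcycle m a b x - x))\<^sup>2)\<^sup>2 / (4 * (norm (kcycle m a b x - x))\<^sup>2)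
      \<and> (norm (ls_step m a b x - z))\<^sup>2 \<le> (norm (kcycle m a b x - z))\<^sup>2"
  using line_search_step[OF assms(3)[symmetric] norm_sq_kcycle_decrease[OF assms(1,2)]]
  unfolding ls_step_def Let_def by blast

lemma ls_iter_Suc: "ls_iter m a b x0 (Suc k) = ls_step m a b (ls_iter m a b x0 k)"
  unfolding ls_iter_def by simp

theorem corollary5:
  fixes m :: nat and a :: "nat \<Rightarrow> real^'n" and b :: "nat \<Rightarrow> real" and x0 :: "real^'n"
  assumes rows_nz: "\<forall>j<m. a j \<noteq> 0"
    and b_range: "\<exists>z. \<forall>j<m. inner (a j) z = b j"
  shows "(\<exists>k. (\<forall>i<k. kcycle m a b (ls_iter m a b x0 i) \<noteq> ls_iter m a b x0 i)
              \<and> kcycle m a b (ls_iter m a b x0 k) = ls_iter m a b x0 k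
              \<and> (\<forall>j<m. inner (a j) (ls_iter m a b x0 k) = b j))
       \<or> ((\<forall>k. kcycle m a b (ls_iter m a b x0 k) \<noteq> ls_iter m a b x0 k)
          \<and> (\<forall>k xs. (\<forall>j<m. inner (a j) xs = b j) \<longrightarrow>
               (let xk = ls_iter m a b x0 k; xk1 = ls_iter m a b x0 (Suc k);
                    Pk = kcycle m a b xk
                in xk1 = (ARG_MIN (\<lambda>\<xi>. (norm (\<xi> - xs))^2) \<xi>. \<xi> \<in> affine hull {xk, Pk})
                 \<and> (norm (xk - xs))^2 - (norm (xk1 - xs))^2
                     = (resid_sq m a b xk + (norm (Pk - xk))^2)^2 / (4 * (norm (Pk - xk))^2)
                 \<and> (norm (xk1 - xs))^2 \<le> (norm (Pk - xs))^2)))"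
  (is "(\<exists>k. (\<forall>i<k. \<not> ?fixed i) \<and> ?fixed k \<and> _) \<or> _")
proof (cases "\<exists>k. ?fixed k")
  case True
  obtain z where z: "\<forall>j<m. inner (a j) z = b j" using b_range by blast
  define k where "k = (LEAST k. ?fixed k)"
  have "?fixed k" unfolding k_def using True by (rule LeastI_ex)
  moreover have "\<forall>i<k. \<not> ?fixed i" unfolding k_def using not_less_Least by blast
  ultimately show ?thesis
    using kcycle_fixed_imp_solution[OF rows_nz z] by blast
next
  case False
  then have "\<forall>k. \<not> ?fixed k" by blast
  then show ?thesis
    using ls_step_props[OF rows_nz] unfolding Let_def ls_iter_Suc by blast
qed

end
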